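(* Let $\mathbf{w} = (\omega_k)_{k\geq 1}$ be a bounded sequence of strictly positive real numbers such that $$\sup_{n \geq 1} \inf_{k \geq 1} \prod_{j=1}^n \omega_{k+j} \leq 1.$$ Then there exists $\beta \geq 1$ such that for every $N \in \mathbb{N}$ the set $$\mathcal{A}^{\mathbf{w}}_{N,\beta} = \Big\{ k \in \mathbb{N} : \max_{k < u \leq k+N} \prod_{j=u}^{k+N} \omega_j \leq \beta \Big\}$$ is infinite. *)

theory Defs
  imports Complex_Main
begin

end

theory Submission
  imports Defs
begin

text \<open>Take \<open>\<beta> = 2\<close>. If for some \<open>N\<close> the set were finite, then beyond some threshold \<open>K\<close>
  every index \<open>v\<close> would end a block \<open>{u..v}\<close> of at most \<open>N\<close> terms whose product exceeds \<open>2\<close>.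
  Chaining such blocks backwards from \<open>v\<close> down to \<open>a \<ge> K\<close> shows that the product of \<open>w\<close> over
  \<open>{a<..v}\<close> is at least \<open>2 ^ ((v - a) div N) / M ^ N\<close>, where \<open>M \<ge> 1\<close> bounds \<open>w\<close>: the last
  block may reach below \<open>a\<close>, but by fewer than \<open>N\<close> terms, each at most \<open>M\<close>. Blocks starting
  before \<open>K\<close> lose only a fixed positive factor, so the products of \<open>w\<close> over all sufficiently
  long blocks are uniformly large, contradicting the hypothesis on the infima.\<close>

lemma prod_atLeastAtMost_split_nat:
  fixes f :: "nat \<Rightarrow> 'a::comm_monoid_mult"
  assumes "a \<le> m" "m \<le> v"
  shows "(\<Prod>j=Suc a..v. f j) = (\<Prod>j=Suc a..m. f j) * (\<Prod>j=Suc m..v. f j)"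
proof -
  have "{Suc a..v} = {Suc a..m} \<union> {Suc m..v}" using assms by auto
  then show ?thesis by (simp add: prod.union_disjoint)
qed

lemma prod_block_chain_lower_bound:
  fixes w :: "nat \<Rightarrow> real" and b M :: real
  assumes pos: "\<And>j. j \<ge> 1 \<Longrightarrow> w j > 0"
    and bound: "\<And>j. j \<ge> 1 \<Longrightarrow> w j \<le> M"
    and "M \<ge> 1" "b \<ge> 1" "N \<ge> 1" "a \<ge> N"
    and blocks: "\<And>v. v > a \<Longrightarrow> \<exists>u. v - N < u \<and> u \<le> v \<and> (\<Prod>j=u..v. w j) > b"
    and "a \<le> v"
  shows "b ^ ((v - a) div N) \<le> M ^ N * (\<Prod>j=Suc a..v. w j)"
  using \<open>a \<le> v\<close>
proof (induction v rule: less_induct)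
  case (less v)
  have "M ^ N \<ge> 1" using \<open>M \<ge> 1\<close> by simp
  show ?case
  proof (cases "v = a")
    case True
    then show ?thesis using \<open>M ^ N \<ge> 1\<close> by simp
  next
    case False
    with less.prems have "a < v" by simp
    then obtain u where u: "v - N < u" "u \<le> v" "(\<Prod>j=u..v. w j) > b"
      using blocks by blast
    have "u \<ge> 1" using u \<open>a < v\<close> \<open>a \<ge> N\<close> by linarith
    show ?thesis
    proof (cases "a < u")
      case True
      have IH: "b ^ ((u - 1 - a) div N) \<le> M ^ N * (\<Prod>j=Suc a..u-1. w j)"
        using less.IH[of "u - 1"] True u(2) by simp
      have "(v - a) div N \<le> (u - 1 - a + N) div N"
        using u(1) True by (intro div_le_mono) linarith
      also have "\<dots> = Suc ((u - 1 - a) div N)" using \<open>N \<ge> 1\<close> by simp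
      finally have "b ^ ((v - a) div N) \<le> b * b ^ ((u - 1 - a) div N)"
        using \<open>b \<ge> 1\<close> by (metis power_Suc power_increasing)
      also have "\<dots> \<le> (\<Prod>j=u..v. w j) * (M ^ N * (\<Prod>j=Suc a..u-1. w j))"
        using IH u(3) \<open>b \<ge> 1\<close> by (intro mult_mono) auto
      also have "\<dots> = M ^ N * (\<Prod>j=Suc a..v. w j)"
        using prod_atLeastAtMost_split_nat[of a "u - 1" v w] True u(2) \<open>u \<ge> 1\<close> by simp
      finally show ?thesis .
    next
      case False
      have "(v - a) div N = 0" using u(1) \<open>a < v\<close> False by simp
      have "(\<Prod>j=u..a. w j) \<le> M ^ (Suc a - u)"
        using pos bound \<open>u \<ge> 1\<close> \<open>M \<ge> 1\<close> by (intro prod_le_power) (auto intro: less_imp_le)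
      also have "\<dots> \<le> M ^ N"
        using u(1) \<open>a < v\<close> \<open>M \<ge> 1\<close> by (intro power_increasing) auto
      finally have head: "(\<Prod>j=u..a. w j) \<le> M ^ N" .
      have tail: "(\<Prod>j=Suc a..v. w j) > 0"
        using pos \<open>a \<ge> N\<close> \<open>N \<ge> 1\<close> by (intro prod_pos) auto
      have "1 \<le> b" by fact
      also have "b < (\<Prod>j=u..v. w j)" by fact
      also have "\<dots> = (\<Prod>j=u..a. w j) * (\<Prod>j=Suc a..v. w j)"
        using prod_atLeastAtMost_split_nat[of "u - 1" a v w] False \<open>a < v\<close> \<open>u \<ge> 1\<close> by simp
      also have "\<dots> \<le> M ^ N * (\<Prod>j=Suc a..v. w j)"
        using head tail by (intro mult_right_mono) auto
      finally show ?thesis using \<open>(v - a) div N = 0\<close> by simp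
    qed
  qed
qed

lemma long_block_products_unbounded:
  fixes w :: "nat \<Rightarrow> real" and b M C :: real
  assumes pos: "\<And>j. j \<ge> 1 \<Longrightarrow> w j > 0"
    and bound: "\<And>j. j \<ge> 1 \<Longrightarrow> w j \<le> M"
    and "M \<ge> 1" "b > 1" "N \<ge> 1" "K \<ge> N"
    and blocks: "\<And>v. v > K \<Longrightarrow> \<exists>u. v - N < u \<and> u \<le> v \<and> (\<Prod>j=u..v. w j) > b"
  shows "\<exists>n\<ge>1. \<forall>k\<ge>1. C \<le> (\<Prod>j=Suc k..k+n. w j)"
proof -
  have chain: "b ^ ((v - a) div N) \<le> M ^ N * (\<Prod>j=Suc a..v. w j)" if "K \<le> a" "a \<le> v" for a v
    using prod_block_chain_lower_bound[OF pos bound \<open>M \<ge> 1\<close> _ \<open>N \<ge> 1\<close>, where b=b and a=a and v=v] blocks that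
      \<open>b > 1\<close> \<open>K \<ge> N\<close> by auto
  define c where "c = Min ((\<lambda>k. \<Prod>j=Suc k..K. w j) ` {1..K})"
  have c_le: "c \<le> (\<Prod>j=Suc k..K. w j)" if "1 \<le> k" "k \<le> K" for k
    unfolding c_def using that by (intro Min_le) auto
  have "c > 0"
    unfolding c_def using pos \<open>K \<ge> N\<close> \<open>N \<ge> 1\<close> by (subst Min_gr_iff) (auto intro!: prod_pos)
  have "c \<le> 1" using c_le[of K] \<open>K \<ge> N\<close> \<open>N \<ge> 1\<close> by simp
  have lower: "c * b ^ ((n - K) div N) \<le> M ^ N * (\<Prod>j=Suc k..k+n. w j)"
    if "k \<ge> 1" "n \<ge> K" for k n
  proof (cases "K \<le> k")
    case True
    have "c * b ^ ((n - K) div N) \<le> 1 * b ^ ((k + n - k) div N)"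
      using \<open>c > 0\<close> \<open>c \<le> 1\<close> \<open>b > 1\<close> by (intro mult_mono power_increasing div_le_mono) auto
    also have "\<dots> \<le> M ^ N * (\<Prod>j=Suc k..k+n. w j)"
      using chain[of k "k + n"] True by simp
    finally show ?thesis .
  next
    case False
    have "b ^ ((n - K) div N) \<le> b ^ ((k + n - K) div N)"
      using \<open>b > 1\<close> by (intro power_increasing div_le_mono) auto
    also have "\<dots> \<le> M ^ N * (\<Prod>j=Suc K..k+n. w j)"
      using chain[of K "k + n"] \<open>n \<ge> K\<close> by simp
    finally have "c * b ^ ((n - K) div N) \<le> (\<Prod>j=Suc k..K. w j) * (M ^ N * (\<Prod>j=Suc K..k+n. w j))"
      using c_le[of k] \<open>k \<ge> 1\<close> False \<open>c > 0\<close> \<open>b > 1\<close> by (intro mult_mono) auto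
    also have "\<dots> = M ^ N * (\<Prod>j=Suc k..k+n. w j)"
      using prod_atLeastAtMost_split_nat[of k K "k + n" w] False \<open>n \<ge> K\<close> by simp
    finally show ?thesis .
  qed
  obtain t where t: "M ^ N * C / c < b ^ t"
    using real_arch_pow[OF \<open>b > 1\<close>] by blast
  define n where "n = K + N * t"
  have "n \<ge> K" "(n - K) div N = t" using \<open>N \<ge> 1\<close> unfolding n_def by simp_all
  have "n \<ge> 1" using \<open>n \<ge> K\<close> \<open>K \<ge> N\<close> \<open>N \<ge> 1\<close> by simp
  moreover have "C \<le> (\<Prod>j=Suc k..k+n. w j)" if "k \<ge> 1" for k
  proof -
    have "M ^ N * C < c * b ^ ((n - K) div N)"
      using t \<open>c > 0\<close> \<open>(n - K) div N = t\<close> by (simp add: field_simps)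
    also have "\<dots> \<le> M ^ N * (\<Prod>j=Suc k..k+n. w j)"
      using lower that \<open>n \<ge> K\<close> .
    finally show ?thesis using \<open>M \<ge> 1\<close> by simp
  qed
  ultimately show ?thesis by blast
qed

lemma heavy_blocks_if_finitely_many_light_windows:
  fixes w :: "nat \<Rightarrow> real"
  assumes "N \<ge> 1" "finite {k. k \<ge> 1 \<and> Max ((\<lambda>u. \<Prod>j=u..k+N. w j) ` {k<..k+N}) \<le> \<beta>}"
    (is "finite ?S")
  shows "\<exists>K\<ge>N. \<forall>v>K. \<exists>u. v - N < u \<and> u \<le> v \<and> (\<Prod>j=u..v. w j) > \<beta>"
proof -
  obtain K where K: "\<And>k. k \<in> ?S \<Longrightarrow> k < K"
    using assms(2) unfolding finite_nat_set_iff_bounded Ball_def by blast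
  have "\<exists>u. v - N < u \<and> u \<le> v \<and> (\<Prod>j=u..v. w j) > \<beta>" if "v > K + N" for v
  proof -
    define k where "k = v - N"
    have "v = k + N" "k \<ge> 1" "\<not> k < K" using that unfolding k_def by auto
    then have "\<not> Max ((\<lambda>u. \<Prod>j=u..k+N. w j) ` {k<..k+N}) \<le> \<beta>" using K[of k] by blast
    moreover have "{k<..k+N} \<noteq> {}" using \<open>N \<ge> 1\<close> by simp
    ultimately obtain u where "k < u" "u \<le> k + N" "(\<Prod>j=u..k+N. w j) > \<beta>"
      by (subst (asm) Max_le_iff) auto
    then show ?thesis using \<open>v = k + N\<close> by auto
  qed
  then show ?thesis by (intro exI[of _ "K + N"]) auto
qed

theorem lemma2p4:
  fixes w :: "nat \<Rightarrow> real"
  assumes pos: "\<And>k. k \<ge> 1 \<Longrightarrow> w k > 0"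
    and bdd: "\<exists>M. \<forall>k\<ge>1. w k \<le> M"
    and cond: "\<forall>n\<ge>1. (INF k\<in>{1..}. \<Prod>j=1..n. w (k + j)) \<le> 1"
  shows "\<exists>\<beta>\<ge>1. \<forall>N\<ge>1. infinite {k::nat. k \<ge> 1 \<and>
            Max ((\<lambda>u. \<Prod>j=u..k+N. w j) ` {k<..k+N}) \<le> \<beta>}"
proof (intro exI[of _ 2] conjI allI impI notI)
  fix N :: nat assume "N \<ge> 1"
    and "finite {k. k \<ge> 1 \<and> Max ((\<lambda>u. \<Prod>j=u..k+N. w j) ` {k<..k+N}) \<le> 2}"
  then obtain K where "K \<ge> N"
    and blocks: "\<And>v. v > K \<Longrightarrow> \<exists>u. v - N < u \<and> u \<le> v \<and> (\<Prod>j=u..v. w j) > 2"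
    using heavy_blocks_if_finitely_many_light_windows by blast
  obtain M where "\<And>k. k \<ge> 1 \<Longrightarrow> w k \<le> M" using bdd by blast
  then have bound: "\<And>k. k \<ge> 1 \<Longrightarrow> w k \<le> max 1 M" by (simp add: le_max_iff_disj)
  obtain n where "n \<ge> 1" and n: "\<And>k. k \<ge> 1 \<Longrightarrow> 2 \<le> (\<Prod>j=Suc k..k+n. w j)"
    using long_block_products_unbounded[OF pos bound max.cobounded1 _ \<open>N \<ge> 1\<close> \<open>K \<ge> N\<close> blocks]
    by auto
  have "2 \<le> (INF k\<in>{1..}. \<Prod>j=1..n. w (k + j))"
  proof (rule cINF_greatest)
    fix k :: nat assume "k \<in> {1..}"
    then show "2 \<le> (\<Prod>j=1..n. w (k + j))"
      using n[of k] prod.shift_bounds_cl_nat_ivl[of w 1 k n] by (simp add: add.commute)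
  qed auto
  with cond \<open>n \<ge> 1\<close> show False by force
qed simp

end
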